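(* Let $T$ be an Artin algebra, $X$ an indecomposable left $T$-module and $n\geq1$ an integer. Let $B_n'$ be the algebra of $n\times n$ upper triangular matrices with entries in $T$, $$B_n'=\begin{pmatrix} T&T&\cdots&T\\ 0&T&\cdots&T\\ \vdots&\vdots&\ddots&\vdots\\ 0&0&\cdots&T\end{pmatrix},$$ and let $M_n$ be the column $\begin{pmatrix}T\\ \vdots\\ T\end{pmatrix}$ with $n$ rows, with left $B_n'$-action and right $T$-action given by matrix multiplication. Then $M_n\otimes_TX$ is an indecomposable left $B_n'$-module.
   Context: Standard notions only: Artin algebras, tensor products of bimodules and modules. *)

theory Defs
  imports "HOL-Algebra.Algebra"
begin

text \<open>HOL-Algebra's locale module requires a commutative ring; we mirror its
axioms for a left module over an arbitrary ring.\<close>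

definition left_module :: "('a, 'c) ring_scheme \<Rightarrow> ('a, 'b, 'd) module_scheme \<Rightarrow> bool" where
  "left_module R M \<longleftrightarrow> ring R \<and> abelian_group M \<and>
     (\<forall>a\<in>carrier R. \<forall>x\<in>carrier M. a \<odot>\<^bsub>M\<^esub> x \<in> carrier M) \<and>
     (\<forall>a\<in>carrier R. \<forall>b\<in>carrier R. \<forall>x\<in>carrier M.
        (a \<oplus>\<^bsub>R\<^esub> b) \<odot>\<^bsub>M\<^esub> x = a \<odot>\<^bsub>M\<^esub> x \<oplus>\<^bsub>M\<^esub> b \<odot>\<^bsub>M\<^esub> x) \<and>
     (\<forall>a\<in>carrier R. \<forall>x\<in>carrier M. \<forall>y\<in>carrier M.
        a \<odot>\<^bsub>M\<^esub> (x \<oplus>\<^bsub>M\<^esub> y) = a \<odot>\<^bsub>M\<^esub> x \<oplus>\<^bsub>M\<^esub> a \<odot>\<^bsub>M\<^esub> y) \<and>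
     (\<forall>a\<in>carrier R. \<forall>b\<in>carrier R. \<forall>x\<in>carrier M.
        (a \<otimes>\<^bsub>R\<^esub> b) \<odot>\<^bsub>M\<^esub> x = a \<odot>\<^bsub>M\<^esub> (b \<odot>\<^bsub>M\<^esub> x)) \<and>
     (\<forall>x\<in>carrier M. \<one>\<^bsub>R\<^esub> \<odot>\<^bsub>M\<^esub> x = x)"

definition finitely_generated_module :: "('a, 'c) ring_scheme \<Rightarrow> ('a, 'b, 'd) module_scheme \<Rightarrow> bool" where
  "finitely_generated_module R M \<longleftrightarrow>
     (\<exists>S. finite S \<and> S \<subseteq> carrier M \<and>
        (\<forall>x\<in>carrier M. \<exists>c\<in>S \<rightarrow> carrier R. x = (\<Oplus>\<^bsub>M\<^esub> s\<in>S. c s \<odot>\<^bsub>M\<^esub> s)))"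

definition indecomposable_module :: "('a, 'c) ring_scheme \<Rightarrow> ('a, 'b, 'd) module_scheme \<Rightarrow> bool" where
  "indecomposable_module R M \<longleftrightarrow> left_module R M \<and> carrier M \<noteq> {\<zero>\<^bsub>M\<^esub>} \<and>
     (\<forall>U V. submodule U R M \<and> submodule V R M \<and> U \<inter> V = {\<zero>\<^bsub>M\<^esub>} \<and>
            set_add M U V = carrier M \<longrightarrow> U = {\<zero>\<^bsub>M\<^esub>} \<or> V = {\<zero>\<^bsub>M\<^esub>})"

definition artinian_cring :: "('r, 'c) ring_scheme \<Rightarrow> bool" where
  "artinian_cring R \<longleftrightarrow> cring R \<and>
     (\<forall>I :: nat \<Rightarrow> 'r set. (\<forall>k. ideal (I k) R) \<and> (\<forall>k. I (Suc k) \<subseteq> I k) \<longrightarrow>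
        (\<exists>N. \<forall>k\<ge>N. I k = I N))"

definition artin_algebra :: "('r, 'c) ring_scheme \<Rightarrow> ('r \<Rightarrow> 'a) \<Rightarrow> ('a, 'e) ring_scheme \<Rightarrow> bool" where
  "artin_algebra R \<phi> T \<longleftrightarrow> artinian_cring R \<and> ring T \<and> \<phi> \<in> ring_hom R T \<and>
     (\<forall>r\<in>carrier R. \<forall>t\<in>carrier T. \<phi> r \<otimes>\<^bsub>T\<^esub> t = t \<otimes>\<^bsub>T\<^esub> \<phi> r) \<and>
     (\<exists>S. finite S \<and> S \<subseteq> carrier T \<and>
        (\<forall>t\<in>carrier T. \<exists>c\<in>S \<rightarrow> carrier R. t = (\<Oplus>\<^bsub>T\<^esub> s\<in>S. \<phi> (c s) \<otimes>\<^bsub>T\<^esub> s)))"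

text \<open>n x n upper triangular matrices over T, indices 0..n-1, entries outside
{(i,j). i <= j < n} are zero.\<close>

definition upper_tri :: "('a, 'e) ring_scheme \<Rightarrow> nat \<Rightarrow> (nat \<Rightarrow> nat \<Rightarrow> 'a) ring" where
  "upper_tri T n = \<lparr>
     carrier = {A. (\<forall>i j. A i j \<in> carrier T) \<and> (\<forall>i j. \<not> (i \<le> j \<and> j < n) \<longrightarrow> A i j = \<zero>\<^bsub>T\<^esub>)},
     monoid.mult = (\<lambda>A B i j. if i \<le> j \<and> j < n then (\<Oplus>\<^bsub>T\<^esub> k\<in>{..<n}. A i k \<otimes>\<^bsub>T\<^esub> B k j) else \<zero>\<^bsub>T\<^esub>),
     monoid.one = (\<lambda>i j. if i = j \<and> j < n then \<one>\<^bsub>T\<^esub> else \<zero>\<^bsub>T\<^esub>),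
     ring.zero = (\<lambda>i j. \<zero>\<^bsub>T\<^esub>),
     ring.add = (\<lambda>A B i j. A i j \<oplus>\<^bsub>T\<^esub> B i j) \<rparr>"

text \<open>The column M_n = T^n (entries with index >= n are zero) as an abelian group
with the left action of upper_tri T n by matrix multiplication.
Its multiplicative ring fields are irrelevant.\<close>

definition column_module :: "('a, 'e) ring_scheme \<Rightarrow> nat \<Rightarrow> (nat \<Rightarrow> nat \<Rightarrow> 'a, nat \<Rightarrow> 'a) module" where
  "column_module T n = \<lparr>
     carrier = {v. (\<forall>i. v i \<in> carrier T) \<and> (\<forall>i\<ge>n. v i = \<zero>\<^bsub>T\<^esub>)},
     monoid.mult = (\<lambda>v w. undefined),
     monoid.one = undefined,
     ring.zero = (\<lambda>i. \<zero>\<^bsub>T\<^esub>),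
     ring.add = (\<lambda>v w i. v i \<oplus>\<^bsub>T\<^esub> w i),
     module.smult = (\<lambda>A v i. if i < n then (\<Oplus>\<^bsub>T\<^esub> k\<in>{..<n}. A i k \<otimes>\<^bsub>T\<^esub> v k) else \<zero>\<^bsub>T\<^esub>) \<rparr>"

definition column_ract :: "('a, 'e) ring_scheme \<Rightarrow> (nat \<Rightarrow> 'a) \<Rightarrow> 'a \<Rightarrow> (nat \<Rightarrow> 'a)" where
  "column_ract T v t = (\<lambda>i. v i \<otimes>\<^bsub>T\<^esub> t)"

text \<open>M tensor_T N is the free abelian group on
carrier M x carrier N modulo the subgroup generated by the bilinearity and
balancing relations; B acts via b (m tensor x) = (b m) tensor x.\<close>

definition tensor_free :: "('b, 'm, 'd) module_scheme \<Rightarrow> ('a, 'x, 'f) module_scheme \<Rightarrow> ('m \<times> 'x \<Rightarrow>\<^sub>0 int) monoid" where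
  "tensor_free M N = free_Abelian_group (carrier M \<times> carrier N)"

definition tensor_relations ::
  "('a, 'e) ring_scheme \<Rightarrow> ('b, 'm, 'd) module_scheme \<Rightarrow> ('m \<Rightarrow> 'a \<Rightarrow> 'm) \<Rightarrow> ('a, 'x, 'f) module_scheme
     \<Rightarrow> ('m \<times> 'x \<Rightarrow>\<^sub>0 int) set" where
  "tensor_relations T M rT N =
     {frag_of (m \<oplus>\<^bsub>M\<^esub> m', x) - frag_of (m, x) - frag_of (m', x) | m m' x.
        m \<in> carrier M \<and> m' \<in> carrier M \<and> x \<in> carrier N} \<union>
     {frag_of (m, x \<oplus>\<^bsub>N\<^esub> x') - frag_of (m, x) - frag_of (m, x') | m x x'.
        m \<in> carrier M \<and> x \<in> carrier N \<and> x' \<in> carrier N} \<union>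
     {frag_of (rT m t, x) - frag_of (m, t \<odot>\<^bsub>N\<^esub> x) | m t x.
        m \<in> carrier M \<and> t \<in> carrier T \<and> x \<in> carrier N}"

definition tensor_kernel ::
  "('a, 'e) ring_scheme \<Rightarrow> ('b, 'm, 'd) module_scheme \<Rightarrow> ('m \<Rightarrow> 'a \<Rightarrow> 'm) \<Rightarrow> ('a, 'x, 'f) module_scheme
     \<Rightarrow> ('m \<times> 'x \<Rightarrow>\<^sub>0 int) set" where
  "tensor_kernel T M rT N = generate (tensor_free M N) (tensor_relations T M rT N)"

definition tensor_act :: "('b, 'm, 'd) module_scheme \<Rightarrow> 'b \<Rightarrow> ('m \<times> 'x \<Rightarrow>\<^sub>0 int) \<Rightarrow> ('m \<times> 'x \<Rightarrow>\<^sub>0 int)" where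
  "tensor_act M b c = frag_extend (\<lambda>(m, x). frag_of (b \<odot>\<^bsub>M\<^esub> m, x)) c"

definition tensor ::
  "('a, 'e) ring_scheme \<Rightarrow> ('b, 'm, 'd) module_scheme \<Rightarrow> ('m \<Rightarrow> 'a \<Rightarrow> 'm) \<Rightarrow> ('a, 'x, 'f) module_scheme
     \<Rightarrow> ('b, ('m \<times> 'x \<Rightarrow>\<^sub>0 int) set) module" where
  "tensor T M rT N =
     (let G = tensor_free M N; K = tensor_kernel T M rT N in
      \<lparr> carrier = carrier (G Mod K),
        monoid.mult = (\<lambda>A B. undefined),
        monoid.one = undefined,
        ring.zero = \<one>\<^bsub>G Mod K\<^esub>,
        ring.add = (\<lambda>A B. A \<otimes>\<^bsub>G Mod K\<^esub> B),
        module.smult = (\<lambda>b A. K <#>\<^bsub>G\<^esub> (tensor_act M b ` A)) \<rparr>)"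

end

theory Submission
  imports Defs
begin

text \<open>
  Write \<open>e\<^sub>j\<close> for the unit columns. The balanced maps \<open>m \<otimes> x \<mapsto> m\<^sub>j x\<close> give coordinates
  \<open>x\<^sub>j\<close> on \<open>M\<^sub>n \<otimes>\<^sub>T X\<close> with every element equal to \<open>\<Sum>\<^sub>j e\<^sub>j \<otimes> x\<^sub>j\<close>, and the matrix unit
  \<open>t E\<^sub>0\<^sub>j\<close> of \<open>B\<^sub>n'\<close> maps that element to \<open>e\<^sub>0 \<otimes> t x\<^sub>j\<close>. Hence for a \<open>B\<^sub>n'\<close>-submodule \<open>U\<close>
  the set \<open>U' = {x. e\<^sub>0 \<otimes> x \<in> U}\<close> is a \<open>T\<close>-submodule of \<open>X\<close>, all coordinates of elements of
  \<open>U\<close> lie in \<open>U'\<close>, and so \<open>U = 0\<close> as soon as \<open>U' = 0\<close>. Applying \<open>E\<^sub>0\<^sub>0\<close> to a decomposition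
  \<open>U \<oplus> V\<close> of the tensor product yields a decomposition \<open>U' \<oplus> V'\<close> of \<open>X\<close>, and indecomposability
  of \<open>X\<close> kills \<open>U'\<close> or \<open>V'\<close>, hence \<open>U\<close> or \<open>V\<close>.
\<close>

lemma (in ring) finsum_swap:
  assumes "finite A" "finite B" "\<And>a b. a \<in> A \<Longrightarrow> b \<in> B \<Longrightarrow> f a b \<in> carrier R"
  shows "(\<Oplus>a\<in>A. \<Oplus>b\<in>B. f a b) = (\<Oplus>b\<in>B. \<Oplus>a\<in>A. f a b)"
  using assms
proof (induction A rule: finite_induct)
  case empty
  then show ?case by (simp add: finsum_zero)
next
  case (insert x F)
  have "(\<Oplus>a\<in>insert x F. \<Oplus>b\<in>B. f a b) = (\<Oplus>b\<in>B. f x b) \<oplus> (\<Oplus>b\<in>B. \<Oplus>a\<in>F. f a b)"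
    using insert by (simp add: finsum_insert)
  also have "\<dots> = (\<Oplus>b\<in>B. f x b \<oplus> (\<Oplus>a\<in>F. f a b))"
    using insert by (intro finsum_addf[symmetric]) auto
  also have "\<dots> = (\<Oplus>b\<in>B. \<Oplus>a\<in>insert x F. f a b)"
    using insert by (intro finsum_cong') (auto simp: finsum_insert)
  finally show ?case .
qed

lemma (in ring) finsum_vec_mat_vec_assoc:
  fixes n :: nat
  assumes "\<And>l. a l \<in> carrier R" "\<And>l k. b l k \<in> carrier R" "\<And>k. c k \<in> carrier R"
  shows "(\<Oplus>k\<in>{..<n}. (\<Oplus>l\<in>{..<n}. a l \<otimes> b l k) \<otimes> c k)
       = (\<Oplus>l\<in>{..<n}. a l \<otimes> (\<Oplus>k\<in>{..<n}. b l k \<otimes> c k))"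
proof -
  have "(\<Oplus>k\<in>{..<n}. (\<Oplus>l\<in>{..<n}. a l \<otimes> b l k) \<otimes> c k)
      = (\<Oplus>k\<in>{..<n}. \<Oplus>l\<in>{..<n}. a l \<otimes> b l k \<otimes> c k)"
    using assms by (intro finsum_cong') (auto intro: finsum_ldistr)
  also have "\<dots> = (\<Oplus>l\<in>{..<n}. \<Oplus>k\<in>{..<n}. a l \<otimes> b l k \<otimes> c k)"
    using assms by (intro finsum_swap) auto
  also have "\<dots> = (\<Oplus>l\<in>{..<n}. a l \<otimes> (\<Oplus>k\<in>{..<n}. b l k \<otimes> c k))"
    using assms by (intro finsum_cong') (auto simp: finsum_rdistr[where f = "\<lambda>k. b _ k \<otimes> c k"] m_assoc)
  finally show ?thesis .
qed

lemma (in ring) finsum_delta: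
  fixes n :: nat
  assumes "\<And>k. f k \<in> carrier R"
  shows "(\<Oplus>k\<in>{..<n}. if i = k then f k else \<zero>) = (if i < n then f i else \<zero>)"
proof (cases "i < n")
  case True
  then show ?thesis
    using finsum_singleton[of i "{..<n}" f] assms by simp
next
  case False
  then have "(\<Oplus>k\<in>{..<n}. if i = k then f k else \<zero>) = (\<Oplus>k\<in>{..<n}. \<zero>)"
    by (intro finsum_cong') auto
  then show ?thesis using False by simp
qed

lemma
  assumes "left_module R M"
  shows left_module_ring: "ring R"
    and left_module_abelian_group: "abelian_group M"
    and left_module_smult_closed: "\<lbrakk>a \<in> carrier R; x \<in> carrier M\<rbrakk> \<Longrightarrow> a \<odot>\<^bsub>M\<^esub> x \<in> carrier M"
    and left_module_smult_l_distr: "\<lbrakk>a \<in> carrier R; b \<in> carrier R; x \<in> carrier M\<rbrakk>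
      \<Longrightarrow> (a \<oplus>\<^bsub>R\<^esub> b) \<odot>\<^bsub>M\<^esub> x = a \<odot>\<^bsub>M\<^esub> x \<oplus>\<^bsub>M\<^esub> b \<odot>\<^bsub>M\<^esub> x"
    and left_module_smult_r_distr: "\<lbrakk>a \<in> carrier R; x \<in> carrier M; y \<in> carrier M\<rbrakk>
      \<Longrightarrow> a \<odot>\<^bsub>M\<^esub> (x \<oplus>\<^bsub>M\<^esub> y) = a \<odot>\<^bsub>M\<^esub> x \<oplus>\<^bsub>M\<^esub> a \<odot>\<^bsub>M\<^esub> y"
    and left_module_smult_assoc: "\<lbrakk>a \<in> carrier R; b \<in> carrier R; x \<in> carrier M\<rbrakk>
      \<Longrightarrow> (a \<otimes>\<^bsub>R\<^esub> b) \<odot>\<^bsub>M\<^esub> x = a \<odot>\<^bsub>M\<^esub> (b \<odot>\<^bsub>M\<^esub> x)"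
    and left_module_smult_one: "x \<in> carrier M \<Longrightarrow> \<one>\<^bsub>R\<^esub> \<odot>\<^bsub>M\<^esub> x = x"
  using assms unfolding left_module_def by blast+

lemma left_module_smult_hom:
  "left_module R M \<Longrightarrow> a \<in> carrier R \<Longrightarrow> (\<lambda>x. a \<odot>\<^bsub>M\<^esub> x) \<in> hom (add_monoid M) (add_monoid M)"
  by (auto intro!: homI simp: left_module_smult_closed left_module_smult_r_distr)

lemma free_Abelian_group_hom_ext:
  assumes H: "group H"
    and f: "f \<in> hom (free_Abelian_group S) H" and g: "g \<in> hom (free_Abelian_group S) H"
    and fg: "\<And>s. s \<in> S \<Longrightarrow> f (frag_of s) = g (frag_of s)"
    and c: "c \<in> carrier (free_Abelian_group S)"
  shows "f c = g c"
proof -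
  interpret f: group_hom "free_Abelian_group S" H f
    by (intro group_hom.intro group_hom_axioms.intro H f group_free_Abelian_group)
  interpret g: group_hom "free_Abelian_group S" H g
    by (intro group_hom.intro group_hom_axioms.intro H g group_free_Abelian_group)
  have diff: "h (x - y) = h x \<otimes>\<^bsub>H\<^esub> inv\<^bsub>H\<^esub> h y"
    if "h \<in> hom (free_Abelian_group S) H" "Poly_Mapping.keys x \<subseteq> S" "Poly_Mapping.keys y \<subseteq> S" for h x y
    using that group_hom.hom_inv[of "free_Abelian_group S" H h y] hom_mult[of h "free_Abelian_group S" H x "- y"]
    by (simp add: group_hom_def group_hom_axioms_def H)
  from c have "Poly_Mapping.keys c \<subseteq> S" by simp
  then show ?thesis
    by (rule free_Abelian_group_induct[where P = "\<lambda>c. f c = g c"])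
       (use f.hom_one g.hom_one diff[OF f] diff[OF g] fg in simp_all)
qed

lemma submodule_subset: "submodule U R M \<Longrightarrow> U \<subseteq> carrier M"
  using subgroup.subset[OF submodule.axioms(1)] by fastforce

lemma submodule_zero_closed: "submodule U R M \<Longrightarrow> \<zero>\<^bsub>M\<^esub> \<in> U"
  using subgroup.one_closed[OF submodule.axioms(1)] by fastforce

lemma submodule_add_closed: "submodule U R M \<Longrightarrow> u \<in> U \<Longrightarrow> v \<in> U \<Longrightarrow> u \<oplus>\<^bsub>M\<^esub> v \<in> U"
  using subgroup.m_closed[OF submodule.axioms(1)] by fastforce

lemma indecomposable_module_nontrivial:
  assumes "indecomposable_module R M"
  obtains x where "x \<in> carrier M" "x \<noteq> \<zero>\<^bsub>M\<^esub>"
  using assms abelian_monoid.zero_closed[OF abelian_group.axioms(1)[OF left_module_abelian_group]]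
  unfolding indecomposable_module_def by blast

lemma indecomposable_moduleD:
  assumes "indecomposable_module R M" "submodule U R M" "submodule V R M"
    "U \<inter> V = {\<zero>\<^bsub>M\<^esub>}" "U <+>\<^bsub>M\<^esub> V = carrier M"
  shows "U = {\<zero>\<^bsub>M\<^esub>} \<or> V = {\<zero>\<^bsub>M\<^esub>}"
  using assms unfolding indecomposable_module_def by blast

section \<open>Upper triangular matrices and the column module\<close>

definition unit_column :: "('a, 'e) ring_scheme \<Rightarrow> nat \<Rightarrow> nat \<Rightarrow> 'a" where
  "unit_column R j = (\<lambda>i. if i = j then \<one>\<^bsub>R\<^esub> else \<zero>\<^bsub>R\<^esub>)"

definition matrix_unit :: "('a, 'e) ring_scheme \<Rightarrow> nat \<Rightarrow> nat \<Rightarrow> 'a \<Rightarrow> nat \<Rightarrow> nat \<Rightarrow> 'a" where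
  "matrix_unit R i j t = (\<lambda>p q. if p = i \<and> q = j then t else \<zero>\<^bsub>R\<^esub>)"

context ring
begin

lemma carrier_upper_tri:
  "A \<in> carrier (upper_tri R n) \<longleftrightarrow>
     (\<forall>i j. A i j \<in> carrier R) \<and> (\<forall>i j. \<not> (i \<le> j \<and> j < n) \<longrightarrow> A i j = \<zero>)"
  by (simp add: upper_tri_def)

lemma upper_tri_mult:
  assumes A: "A \<in> carrier (upper_tri R n)" and C: "C \<in> carrier (upper_tri R n)"
  shows "A \<otimes>\<^bsub>upper_tri R n\<^esub> C = (\<lambda>i j. \<Oplus>k\<in>{..<n}. A i k \<otimes> C k j)"
proof (intro ext)
  fix i j
  have "A i k \<otimes> C k j = \<zero>" if "\<not> (i \<le> j \<and> j < n)" for k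
    using that A C by (cases "i \<le> k \<and> k < n") (auto simp: carrier_upper_tri)
  then show "(A \<otimes>\<^bsub>upper_tri R n\<^esub> C) i j = (\<Oplus>k\<in>{..<n}. A i k \<otimes> C k j)"
    by (simp add: upper_tri_def)
qed

lemma ring_upper_tri: "ring (upper_tri R n)"
proof (rule ringI)
  show "abelian_group (upper_tri R n)"
  proof (rule abelian_groupI)
    fix A assume "A \<in> carrier (upper_tri R n)"
    then show "\<exists>C\<in>carrier (upper_tri R n). C \<oplus>\<^bsub>upper_tri R n\<^esub> A = \<zero>\<^bsub>upper_tri R n\<^esub>"
      by (intro bexI[of _ "\<lambda>i j. \<ominus> A i j"]) (auto simp: upper_tri_def l_neg)
  qed (auto simp: upper_tri_def fun_eq_iff a_ac)
  show "monoid (upper_tri R n)"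
  proof (rule monoidI)
    fix A C D assume A: "A \<in> carrier (upper_tri R n)" and C: "C \<in> carrier (upper_tri R n)"
      and D: "D \<in> carrier (upper_tri R n)"
    show AC: "A \<otimes>\<^bsub>upper_tri R n\<^esub> C \<in> carrier (upper_tri R n)"
      using A C by (auto simp: upper_tri_def intro!: finsum_closed)
    have CD: "C \<otimes>\<^bsub>upper_tri R n\<^esub> D \<in> carrier (upper_tri R n)"
      using C D by (auto simp: upper_tri_def intro!: finsum_closed)
    show "A \<otimes>\<^bsub>upper_tri R n\<^esub> C \<otimes>\<^bsub>upper_tri R n\<^esub> D = A \<otimes>\<^bsub>upper_tri R n\<^esub> (C \<otimes>\<^bsub>upper_tri R n\<^esub> D)"
      using A C D AC CD
      by (simp add: upper_tri_mult) (intro ext finsum_vec_mat_vec_assoc, auto simp: carrier_upper_tri)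
    have one: "\<one>\<^bsub>upper_tri R n\<^esub> \<in> carrier (upper_tri R n)"
      by (simp add: upper_tri_def)
    have "(\<Oplus>k\<in>{..<n}. \<one>\<^bsub>upper_tri R n\<^esub> i k \<otimes> A k j) = (\<Oplus>k\<in>{..<n}. if i = k then A k j else \<zero>)"
      for i j using A by (intro finsum_cong') (auto simp: upper_tri_def)
    then show "\<one>\<^bsub>upper_tri R n\<^esub> \<otimes>\<^bsub>upper_tri R n\<^esub> A = A"
      using A one by (auto intro!: ext simp: upper_tri_mult finsum_delta carrier_upper_tri)
    have "(\<Oplus>k\<in>{..<n}. A i k \<otimes> \<one>\<^bsub>upper_tri R n\<^esub> k j) = (\<Oplus>k\<in>{..<n}. if j = k then A i k else \<zero>)"
      for i j using A by (intro finsum_cong') (auto simp: upper_tri_def)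
    then show "A \<otimes>\<^bsub>upper_tri R n\<^esub> \<one>\<^bsub>upper_tri R n\<^esub> = A"
      using A one by (auto intro!: ext simp: upper_tri_mult finsum_delta carrier_upper_tri)
  qed (simp add: upper_tri_def)
next
  fix A C D assume A: "A \<in> carrier (upper_tri R n)" and C: "C \<in> carrier (upper_tri R n)"
    and D: "D \<in> carrier (upper_tri R n)"
  show "(A \<oplus>\<^bsub>upper_tri R n\<^esub> C) \<otimes>\<^bsub>upper_tri R n\<^esub> D
      = A \<otimes>\<^bsub>upper_tri R n\<^esub> D \<oplus>\<^bsub>upper_tri R n\<^esub> C \<otimes>\<^bsub>upper_tri R n\<^esub> D"
    using A C D by (auto intro!: ext simp: upper_tri_def l_distr finsum_addf)
  show "D \<otimes>\<^bsub>upper_tri R n\<^esub> (A \<oplus>\<^bsub>upper_tri R n\<^esub> C)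
      = D \<otimes>\<^bsub>upper_tri R n\<^esub> A \<oplus>\<^bsub>upper_tri R n\<^esub> D \<otimes>\<^bsub>upper_tri R n\<^esub> C"
    using A C D by (auto intro!: ext simp: upper_tri_def r_distr finsum_addf)
qed

lemma carrier_column_module:
  "v \<in> carrier (column_module R n) \<longleftrightarrow> (\<forall>i. v i \<in> carrier R) \<and> (\<forall>i\<ge>n. v i = \<zero>)"
  by (simp add: column_module_def)

lemma column_smult:
  assumes "A \<in> carrier (upper_tri R n)" "v \<in> carrier (column_module R n)"
  shows "A \<odot>\<^bsub>column_module R n\<^esub> v = (\<lambda>i. \<Oplus>k\<in>{..<n}. A i k \<otimes> v k)"
  using assms by (auto intro!: ext simp: column_module_def carrier_upper_tri)

lemma abelian_group_column_module: "abelian_group (column_module R n)"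
proof (rule abelian_groupI)
  fix v assume "v \<in> carrier (column_module R n)"
  then show "\<exists>w\<in>carrier (column_module R n). w \<oplus>\<^bsub>column_module R n\<^esub> v = \<zero>\<^bsub>column_module R n\<^esub>"
    by (intro bexI[of _ "\<lambda>i. \<ominus> v i"]) (auto simp: column_module_def l_neg)
qed (auto simp: column_module_def fun_eq_iff a_ac)

lemma left_module_column_module: "left_module (upper_tri R n) (column_module R n)"
  unfolding left_module_def
proof (intro conjI ballI)
  show "ring (upper_tri R n)" by (rule ring_upper_tri)
  show "abelian_group (column_module R n)" by (rule abelian_group_column_module)
next
  fix A C v w
  assume A: "A \<in> carrier (upper_tri R n)" and C: "C \<in> carrier (upper_tri R n)"
    and v: "v \<in> carrier (column_module R n)" and w: "w \<in> carrier (column_module R n)"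
  show "A \<odot>\<^bsub>column_module R n\<^esub> v \<in> carrier (column_module R n)"
    using A v by (auto simp: column_module_def carrier_upper_tri intro!: finsum_closed)
  show "(A \<oplus>\<^bsub>upper_tri R n\<^esub> C) \<odot>\<^bsub>column_module R n\<^esub> v
      = A \<odot>\<^bsub>column_module R n\<^esub> v \<oplus>\<^bsub>column_module R n\<^esub> C \<odot>\<^bsub>column_module R n\<^esub> v"
    using A C v
    by (auto intro!: ext simp: column_module_def upper_tri_def l_distr finsum_addf)
  show "A \<odot>\<^bsub>column_module R n\<^esub> (v \<oplus>\<^bsub>column_module R n\<^esub> w)
      = A \<odot>\<^bsub>column_module R n\<^esub> v \<oplus>\<^bsub>column_module R n\<^esub> A \<odot>\<^bsub>column_module R n\<^esub> w"
    using A v w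
    by (auto intro!: ext simp: column_module_def carrier_upper_tri r_distr finsum_addf)
  have AC: "A \<otimes>\<^bsub>upper_tri R n\<^esub> C \<in> carrier (upper_tri R n)"
    using A C ring.ring_simprules(5)[OF ring_upper_tri] by blast
  have Cv: "C \<odot>\<^bsub>column_module R n\<^esub> v \<in> carrier (column_module R n)"
    using C v by (auto simp: column_module_def carrier_upper_tri intro!: finsum_closed)
  show "(A \<otimes>\<^bsub>upper_tri R n\<^esub> C) \<odot>\<^bsub>column_module R n\<^esub> v
      = A \<odot>\<^bsub>column_module R n\<^esub> (C \<odot>\<^bsub>column_module R n\<^esub> v)"
    using A C v AC Cv
    by (simp add: column_smult upper_tri_mult)
       (intro ext finsum_vec_mat_vec_assoc, auto simp: carrier_upper_tri carrier_column_module)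
next
  fix v assume v: "v \<in> carrier (column_module R n)"
  have "(\<Oplus>k\<in>{..<n}. \<one>\<^bsub>upper_tri R n\<^esub> i k \<otimes> v k) = (\<Oplus>k\<in>{..<n}. if i = k then v k else \<zero>)"
    for i using v by (intro finsum_cong') (auto simp: upper_tri_def carrier_column_module)
  then show "\<one>\<^bsub>upper_tri R n\<^esub> \<odot>\<^bsub>column_module R n\<^esub> v = v"
    using v by (auto intro!: ext simp: column_smult finsum_delta carrier_column_module
        ring.ring_simprules(6)[OF ring_upper_tri])
qed

lemma column_ract_closed:
  "v \<in> carrier (column_module R n) \<Longrightarrow> t \<in> carrier R \<Longrightarrow> column_ract R v t \<in> carrier (column_module R n)"
  by (auto simp: carrier_column_module column_ract_def)

lemma column_smult_ract:
  assumes A: "A \<in> carrier (upper_tri R n)" and v: "v \<in> carrier (column_module R n)" and t: "t \<in> carrier R"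
  shows "A \<odot>\<^bsub>column_module R n\<^esub> column_ract R v t = column_ract R (A \<odot>\<^bsub>column_module R n\<^esub> v) t"
  using assms column_ract_closed[OF v t]
  by (auto intro!: ext simp: column_smult column_ract_def carrier_upper_tri carrier_column_module
      m_assoc finsum_ldistr[where f = "\<lambda>k. A _ k \<otimes> v k"])

lemma unit_column_closed: "j < n \<Longrightarrow> unit_column R j \<in> carrier (column_module R n)"
  by (auto simp: carrier_column_module unit_column_def)

lemma matrix_unit_closed:
  "i \<le> j \<Longrightarrow> j < n \<Longrightarrow> t \<in> carrier R \<Longrightarrow> matrix_unit R i j t \<in> carrier (upper_tri R n)"
  by (auto simp: carrier_upper_tri matrix_unit_def)

lemma matrix_unit_smult:
  assumes ij: "i \<le> j" "j < n" and t: "t \<in> carrier R" and v: "v \<in> carrier (column_module R n)"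
  shows "matrix_unit R i j t \<odot>\<^bsub>column_module R n\<^esub> v = column_ract R (unit_column R i) (t \<otimes> v j)"
proof (rule ext)
  fix p
  have "(\<Oplus>k\<in>{..<n}. matrix_unit R i j t p k \<otimes> v k)
      = (\<Oplus>k\<in>{..<n}. if j = k then (if p = i then t else \<zero>) \<otimes> v k else \<zero>)"
    using t v by (intro finsum_cong') (auto simp: matrix_unit_def carrier_column_module)
  then show "(matrix_unit R i j t \<odot>\<^bsub>column_module R n\<^esub> v) p = column_ract R (unit_column R i) (t \<otimes> v j) p"
    using ij t v by (simp add: column_smult matrix_unit_closed finsum_delta carrier_column_module
        column_ract_def unit_column_def)
qed

lemma finsum_column_module:
  assumes "finite J" "f \<in> J \<rightarrow> carrier (column_module R n)"
  shows "(\<Oplus>\<^bsub>column_module R n\<^esub> j\<in>J. f j) i = (\<Oplus>j\<in>J. f j i)"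
  using assms
proof (induction J rule: finite_induct)
  case empty
  then show ?case by (simp add: finsum_def finprod_def column_module_def)
next
  case (insert a J)
  interpret C: abelian_group "column_module R n" by (rule abelian_group_column_module)
  show ?case
    using insert by (simp add: C.finsum_insert finsum_insert) (simp add: column_module_def Pi_def)
qed

lemma column_eq_finsum_unit_columns:
  assumes v: "v \<in> carrier (column_module R n)"
  shows "v = (\<Oplus>\<^bsub>column_module R n\<^esub> j\<in>{..<n}. column_ract R (unit_column R j) (v j))"
proof (rule ext)
  fix i
  have "(\<Oplus>\<^bsub>column_module R n\<^esub> j\<in>{..<n}. column_ract R (unit_column R j) (v j)) i
      = (\<Oplus>j\<in>{..<n}. column_ract R (unit_column R j) (v j) i)"
    using v by (intro finsum_column_module) (auto intro!: column_ract_closed unit_column_closed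
        simp: carrier_column_module)
  also have "\<dots> = (\<Oplus>j\<in>{..<n}. if i = j then v j else \<zero>)"
    using v by (intro finsum_cong') (auto simp: column_ract_def unit_column_def carrier_column_module)
  finally show "v i = (\<Oplus>\<^bsub>column_module R n\<^esub> j\<in>{..<n}. column_ract R (unit_column R j) (v j)) i"
    using v by (simp add: finsum_delta carrier_column_module)
qed

end

section \<open>Tensor product of a bimodule with a left module\<close>

locale tensor_bimodule =
  fixes B :: "('b, 'c) ring_scheme" and T :: "('a, 'e) ring_scheme"
    and M :: "('b, 'm, 'd) module_scheme" and rT :: "'m \<Rightarrow> 'a \<Rightarrow> 'm"
    and N :: "('a, 'x, 'f) module_scheme"
  assumes M_module: "left_module B M" and N_module: "left_module T N"
    and ract_closed: "\<lbrakk>m \<in> carrier M; t \<in> carrier T\<rbrakk> \<Longrightarrow> rT m t \<in> carrier M"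
    and smult_ract: "\<lbrakk>b \<in> carrier B; m \<in> carrier M; t \<in> carrier T\<rbrakk>
      \<Longrightarrow> b \<odot>\<^bsub>M\<^esub> rT m t = rT (b \<odot>\<^bsub>M\<^esub> m) t"
begin

sublocale M: abelian_group M by (rule left_module_abelian_group[OF M_module])
sublocale N: abelian_group N by (rule left_module_abelian_group[OF N_module])

abbreviation G where "G \<equiv> tensor_free M N"
abbreviation K where "K \<equiv> tensor_kernel T M rT N"
abbreviation MN where "MN \<equiv> tensor T M rT N"

definition tmul :: "'m \<Rightarrow> 'x \<Rightarrow> ('m \<times> 'x \<Rightarrow>\<^sub>0 int) set" where
  "tmul m x = K #>\<^bsub>G\<^esub> frag_of (m, x)"

lemma carrier_G: "c \<in> carrier G \<longleftrightarrow> Poly_Mapping.keys c \<subseteq> carrier M \<times> carrier N"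
  by (simp add: tensor_free_def)

lemma G_ops [simp]: "c \<otimes>\<^bsub>G\<^esub> d = c + d" "\<one>\<^bsub>G\<^esub> = 0"
  by (simp_all add: tensor_free_def)

lemma G_inv [simp]: "c \<in> carrier G \<Longrightarrow> inv\<^bsub>G\<^esub> c = - c"
  by (simp add: tensor_free_def)

lemma comm_group_G: "comm_group G"
  by (simp add: tensor_free_def abelian_free_Abelian_group)

lemma frag_of_in_G [simp]: "frag_of (m, x) \<in> carrier G \<longleftrightarrow> m \<in> carrier M \<and> x \<in> carrier N"
  by (simp add: tensor_free_def)

lemma zero_in_G [simp]: "0 \<in> carrier G"
  by (simp add: carrier_G)

lemma G_diff_closed: "c \<in> carrier G \<Longrightarrow> d \<in> carrier G \<Longrightarrow> c - d \<in> carrier G"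
  unfolding carrier_G by (intro order.trans[OF keys_diff] Un_least)

lemma G_induct [consumes 1, case_names zero diff frag]:
  assumes "c \<in> carrier G" and "P 0"
    and "\<And>x y. \<lbrakk>x \<in> carrier G; y \<in> carrier G; P x; P y\<rbrakk> \<Longrightarrow> P (x - y)"
    and "\<And>m x. \<lbrakk>m \<in> carrier M; x \<in> carrier N\<rbrakk> \<Longrightarrow> P (frag_of (m, x))"
  shows "P c"
  using assms(1) unfolding carrier_G
  by (rule free_Abelian_group_induct) (use assms(2-4) in \<open>auto simp: carrier_G\<close>)

lemma tensor_relations_closed: "tensor_relations T M rT N \<subseteq> carrier G"
  unfolding tensor_relations_def
  by (auto intro!: G_diff_closed ract_closed left_module_smult_closed[OF N_module])

lemma subgroup_K: "subgroup K G"
  unfolding tensor_kernel_def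
  by (rule group.generate_is_subgroup[OF comm_group.axioms(2)[OF comm_group_G] tensor_relations_closed])

lemma K_closed: "c \<in> K \<Longrightarrow> c \<in> carrier G"
  using subgroup.subset[OF subgroup_K] by blast

lemma zero_in_K: "0 \<in> K"
  using subgroup.one_closed[OF subgroup_K] by simp

lemma add_in_K: "c \<in> K \<Longrightarrow> d \<in> K \<Longrightarrow> c + d \<in> K"
  using subgroup.m_closed[OF subgroup_K] by simp

lemma minus_in_K: "c \<in> K \<Longrightarrow> - c \<in> K"
  using subgroup.m_inv_closed[OF subgroup_K] K_closed by fastforce

lemma diff_in_K: "c \<in> K \<Longrightarrow> d \<in> K \<Longrightarrow> c - d \<in> K"
  using add_in_K[OF _ minus_in_K] by (metis diff_conv_add_uminus)

lemma relation_in_K: "r \<in> tensor_relations T M rT N \<Longrightarrow> r \<in> K"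
  unfolding tensor_kernel_def by (rule generate.incl)

lemma add_left_in_K:
  "\<lbrakk>m \<in> carrier M; m' \<in> carrier M; x \<in> carrier N\<rbrakk>
   \<Longrightarrow> frag_of (m \<oplus>\<^bsub>M\<^esub> m', x) - frag_of (m, x) - frag_of (m', x) \<in> K"
  by (rule relation_in_K) (auto simp: tensor_relations_def)

lemma add_right_in_K:
  "\<lbrakk>m \<in> carrier M; x \<in> carrier N; x' \<in> carrier N\<rbrakk>
   \<Longrightarrow> frag_of (m, x \<oplus>\<^bsub>N\<^esub> x') - frag_of (m, x) - frag_of (m, x') \<in> K"
  by (rule relation_in_K) (auto simp: tensor_relations_def)

lemma balanced_in_K:
  "\<lbrakk>m \<in> carrier M; t \<in> carrier T; x \<in> carrier N\<rbrakk>
   \<Longrightarrow> frag_of (rT m t, x) - frag_of (m, t \<odot>\<^bsub>N\<^esub> x) \<in> K"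
  by (rule relation_in_K) (auto simp: tensor_relations_def)

lemma rcos_K: "K #>\<^bsub>G\<^esub> c = (\<lambda>k. k + c) ` K"
  by (auto simp: r_coset_def)

lemma rcos_K_add: "c \<in> carrier G \<Longrightarrow> d \<in> carrier G \<Longrightarrow> (K #>\<^bsub>G\<^esub> c) <#>\<^bsub>G\<^esub> (K #>\<^bsub>G\<^esub> d) = K #>\<^bsub>G\<^esub> (c + d)"
  using normal.rcos_sum[OF comm_group.subgroup_imp_normal[OF comm_group_G subgroup_K]] by simp

lemma rcos_K_eqI:
  assumes "c - d \<in> K"
  shows "K #>\<^bsub>G\<^esub> c = K #>\<^bsub>G\<^esub> d"
proof -
  have "k + c \<in> (\<lambda>k. k + d) ` K" if "k \<in> K" for k
    using that assms by (intro image_eqI[of _ _ "k + (c - d)"]) (auto intro: add_in_K)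
  moreover have "k + d \<in> (\<lambda>k. k + c) ` K" if "k \<in> K" for k
    using that assms by (intro image_eqI[of _ _ "k - (c - d)"]) (auto intro: diff_in_K)
  ultimately show ?thesis unfolding rcos_K by blast
qed

lemma rcos_K_self: "c \<in> K \<Longrightarrow> K #>\<^bsub>G\<^esub> c = K"
  by (rule subgroup.rcos_const[OF subgroup_K comm_group.axioms(2)[OF comm_group_G]])

lemma comm_group_tensor: "comm_group (add_monoid MN)"
proof -
  \<comment> \<open>\<open>add_monoid MN\<close> is \<open>G Mod K\<close> up to the record extension, which the group axioms ignore.\<close>
  have FG: "carrier (add_monoid MN) = carrier (G Mod K)" "monoid.mult (add_monoid MN) = monoid.mult (G Mod K)"
    "one (add_monoid MN) = one (G Mod K)"
    by (simp_all add: tensor_def Let_def FactGroup_def)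
  show ?thesis
    using comm_group.abelian_FactGroup[OF comm_group_G subgroup_K]
    unfolding comm_group_def comm_monoid_def comm_monoid_axioms_def group_def group_axioms_def
      monoid_def Units_def FG .
qed

lemma abelian_group_tensor: "abelian_group MN"
  using comm_group_tensor
  by (intro abelian_group.intro abelian_monoid.intro abelian_group_axioms.intro)
     (simp_all add: comm_group.axioms(1))

sublocale MN: abelian_group MN by (rule abelian_group_tensor)

lemma carrier_tensor: "carrier MN = rcosets\<^bsub>G\<^esub> K"
  by (simp add: tensor_def Let_def FactGroup_def)

lemma tensor_zero: "\<zero>\<^bsub>MN\<^esub> = K"
  by (simp add: tensor_def Let_def FactGroup_def)

lemma tensor_add: "A \<oplus>\<^bsub>MN\<^esub> C = A <#>\<^bsub>G\<^esub> C"
  by (simp add: tensor_def Let_def FactGroup_def)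

lemma tensor_smult: "b \<odot>\<^bsub>MN\<^esub> A = K <#>\<^bsub>G\<^esub> (tensor_act M b ` A)"
  by (simp add: tensor_def Let_def)

lemma tensor_elem_cases [consumes 1]:
  assumes "A \<in> carrier MN"
  obtains c where "c \<in> carrier G" "A = K #>\<^bsub>G\<^esub> c"
  using assms by (auto simp: carrier_tensor RCOSETS_def)

lemma rcos_K_in_tensor: "c \<in> carrier G \<Longrightarrow> K #>\<^bsub>G\<^esub> c \<in> carrier MN"
  by (auto simp: carrier_tensor RCOSETS_def)

lemma rcos_K_hom: "(\<lambda>c. K #>\<^bsub>G\<^esub> c) \<in> hom G (add_monoid MN)"
  using normal.r_coset_hom_Mod[OF comm_group.subgroup_imp_normal[OF comm_group_G subgroup_K]]
  by (simp add: hom_def tensor_def Let_def FactGroup_def)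

lemma tmul_closed: "m \<in> carrier M \<Longrightarrow> x \<in> carrier N \<Longrightarrow> tmul m x \<in> carrier MN"
  by (simp add: tmul_def rcos_K_in_tensor)

lemma tmul_add_left:
  "\<lbrakk>m \<in> carrier M; m' \<in> carrier M; x \<in> carrier N\<rbrakk>
   \<Longrightarrow> tmul (m \<oplus>\<^bsub>M\<^esub> m') x = tmul m x \<oplus>\<^bsub>MN\<^esub> tmul m' x"
  using add_left_in_K by (simp add: tmul_def tensor_add rcos_K_add rcos_K_eqI diff_diff_eq)

lemma tmul_add_right:
  "\<lbrakk>m \<in> carrier M; x \<in> carrier N; x' \<in> carrier N\<rbrakk>
   \<Longrightarrow> tmul m (x \<oplus>\<^bsub>N\<^esub> x') = tmul m x \<oplus>\<^bsub>MN\<^esub> tmul m x'"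
  using add_right_in_K by (simp add: tmul_def tensor_add rcos_K_add rcos_K_eqI diff_diff_eq)

lemma tmul_balanced:
  "\<lbrakk>m \<in> carrier M; t \<in> carrier T; x \<in> carrier N\<rbrakk> \<Longrightarrow> tmul (rT m t) x = tmul m (t \<odot>\<^bsub>N\<^esub> x)"
  unfolding tmul_def by (rule rcos_K_eqI[OF balanced_in_K])

lemma tmul_zero_left: "x \<in> carrier N \<Longrightarrow> tmul \<zero>\<^bsub>M\<^esub> x = \<zero>\<^bsub>MN\<^esub>"
  using minus_in_K[OF add_left_in_K[of "\<zero>\<^bsub>M\<^esub>" "\<zero>\<^bsub>M\<^esub>" x]]
  by (simp add: tmul_def tensor_zero rcos_K_self)

lemma tmul_zero_right: "m \<in> carrier M \<Longrightarrow> tmul m \<zero>\<^bsub>N\<^esub> = \<zero>\<^bsub>MN\<^esub>"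
  using minus_in_K[OF add_right_in_K[of m "\<zero>\<^bsub>N\<^esub>" "\<zero>\<^bsub>N\<^esub>"]]
  by (simp add: tmul_def tensor_zero rcos_K_self)

lemma tmul_finsum_left:
  assumes "finite J" "f \<in> J \<rightarrow> carrier M" "x \<in> carrier N"
  shows "tmul (\<Oplus>\<^bsub>M\<^esub> j\<in>J. f j) x = (\<Oplus>\<^bsub>MN\<^esub> j\<in>J. tmul (f j) x)"
  using assms
proof (induction J rule: finite_induct)
  case empty
  then show ?case by (simp add: tmul_zero_left)
next
  case (insert j J)
  then have "tmul (\<Oplus>\<^bsub>M\<^esub> j\<in>insert j J. f j) x = tmul (f j) x \<oplus>\<^bsub>MN\<^esub> tmul (\<Oplus>\<^bsub>M\<^esub> j\<in>J. f j) x"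
    by (simp add: M.finsum_insert tmul_add_left M.finsum_closed)
  with insert show ?case
    by (simp add: MN.finsum_insert tmul_closed Pi_def)
qed

lemma act_frag [simp]: "tensor_act M b (frag_of (m, x)) = frag_of (b \<odot>\<^bsub>M\<^esub> m, x)"
  by (simp add: tensor_act_def)

lemma act_zero [simp]: "tensor_act M b 0 = 0"
  by (simp add: tensor_act_def)

lemma act_add: "tensor_act M b (c + d) = tensor_act M b c + tensor_act M b d"
  by (simp add: tensor_act_def frag_extend_add)

lemma act_diff: "tensor_act M b (c - d) = tensor_act M b c - tensor_act M b d"
  by (simp add: tensor_act_def frag_extend_diff)

lemma act_minus: "tensor_act M b (- c) = - tensor_act M b c"
  by (simp add: tensor_act_def frag_extend_minus)

lemma act_closed:
  assumes "b \<in> carrier B" "c \<in> carrier G"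
  shows "tensor_act M b c \<in> carrier G"
  using assms(2)
  by (induction c rule: G_induct)
     (use assms(1) in \<open>auto simp: act_diff G_diff_closed left_module_smult_closed[OF M_module]\<close>)

lemma act_relation_in_K:
  "b \<in> carrier B \<Longrightarrow> r \<in> tensor_relations T M rT N \<Longrightarrow> tensor_act M b r \<in> K"
  by (auto simp: tensor_relations_def act_diff left_module_smult_r_distr[OF M_module] smult_ract
      intro!: add_left_in_K add_right_in_K balanced_in_K left_module_smult_closed[OF M_module])

lemma act_K:
  assumes b: "b \<in> carrier B" and c: "c \<in> K"
  shows "tensor_act M b c \<in> K"
proof -
  from c have "c \<in> generate G (tensor_relations T M rT N)"
    by (simp add: tensor_kernel_def)
  then show ?thesis
  proof (induction c rule: generate.induct)
    case one
    then show ?case by (simp add: zero_in_K)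
  next
    case (incl h)
    then show ?case by (rule act_relation_in_K[OF b])
  next
    case (inv h)
    then have "h \<in> carrier G" using tensor_relations_closed by blast
    then show ?case using inv by (simp add: act_minus minus_in_K act_relation_in_K[OF b])
  next
    case (eng h1 h2)
    then show ?case by (simp add: act_add add_in_K)
  qed
qed

lemma smult_rcos_K:
  assumes b: "b \<in> carrier B"
  shows "b \<odot>\<^bsub>MN\<^esub> (K #>\<^bsub>G\<^esub> c) = K #>\<^bsub>G\<^esub> tensor_act M b c"
proof -
  have "k + tensor_act M b (k' + c) \<in> (\<lambda>k. k + tensor_act M b c) ` K" if "k \<in> K" "k' \<in> K" for k k'
    using that act_K[OF b] by (intro image_eqI[of _ _ "k + tensor_act M b k'"]) (auto simp: act_add add_in_K)
  moreover have "k + tensor_act M b c \<in> (\<Union>h\<in>K. \<Union>k'\<in>K. {h + tensor_act M b (k' + c)})" if "k \<in> K" for k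
    using that zero_in_K by force
  ultimately show ?thesis
    unfolding tensor_smult rcos_K set_mult_def by auto
qed

lemma smult_tmul:
  "b \<in> carrier B \<Longrightarrow> b \<odot>\<^bsub>MN\<^esub> tmul m x = tmul (b \<odot>\<^bsub>M\<^esub> m) x"
  by (simp add: tmul_def smult_rcos_K)

lemma act_l_distr_mod_K:
  assumes a: "a \<in> carrier B" and b: "b \<in> carrier B" and c: "c \<in> carrier G"
  shows "tensor_act M (a \<oplus>\<^bsub>B\<^esub> b) c - (tensor_act M a c + tensor_act M b c) \<in> K"
  using c
proof (induction c rule: G_induct)
  case zero
  then show ?case by (simp add: zero_in_K)
next
  case (diff x y)
  then show ?case
    using diff_in_K[OF diff.IH] by (simp add: act_diff algebra_simps)
next
  case (frag m x)
  then show ?case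
    using a b by (simp add: left_module_smult_l_distr[OF M_module] add_left_in_K
        left_module_smult_closed[OF M_module] diff_diff_eq[symmetric])
qed

lemma act_assoc:
  assumes "a \<in> carrier B" "b \<in> carrier B" "c \<in> carrier G"
  shows "tensor_act M a (tensor_act M b c) = tensor_act M (a \<otimes>\<^bsub>B\<^esub> b) c"
  using assms(3) by (induction c rule: G_induct)
    (simp_all add: act_diff left_module_smult_assoc[OF M_module] assms(1,2))

lemma act_one: "c \<in> carrier G \<Longrightarrow> tensor_act M \<one>\<^bsub>B\<^esub> c = c"
  by (induction c rule: G_induct) (simp_all add: act_diff left_module_smult_one[OF M_module])

lemma left_module_tensor: "left_module B MN"
  unfolding left_module_def
proof (intro conjI ballI)
  show "ring B" by (rule left_module_ring[OF M_module])
  show "abelian_group MN" by (rule abelian_group_tensor)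
next
  fix a b A C assume a: "a \<in> carrier B" and b: "b \<in> carrier B"
    and A: "A \<in> carrier MN" and C: "C \<in> carrier MN"
  obtain c where c: "c \<in> carrier G" "A = K #>\<^bsub>G\<^esub> c" using A by (rule tensor_elem_cases)
  obtain d where d: "d \<in> carrier G" "C = K #>\<^bsub>G\<^esub> d" using C by (rule tensor_elem_cases)
  have ring_B: "ring B" by (rule left_module_ring[OF M_module])
  show "a \<odot>\<^bsub>MN\<^esub> A \<in> carrier MN"
    using a c by (simp add: smult_rcos_K rcos_K_in_tensor act_closed)
  show "(a \<oplus>\<^bsub>B\<^esub> b) \<odot>\<^bsub>MN\<^esub> A = a \<odot>\<^bsub>MN\<^esub> A \<oplus>\<^bsub>MN\<^esub> b \<odot>\<^bsub>MN\<^esub> A"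
    using a b c act_l_distr_mod_K[OF a b c(1)]
    by (simp add: smult_rcos_K ring.ring_simprules(1)[OF ring_B] tensor_add rcos_K_add act_closed
        rcos_K_eqI)
  show "a \<odot>\<^bsub>MN\<^esub> (A \<oplus>\<^bsub>MN\<^esub> C) = a \<odot>\<^bsub>MN\<^esub> A \<oplus>\<^bsub>MN\<^esub> a \<odot>\<^bsub>MN\<^esub> C"
    using a c d by (simp add: smult_rcos_K tensor_add rcos_K_add act_closed act_add)
  show "(a \<otimes>\<^bsub>B\<^esub> b) \<odot>\<^bsub>MN\<^esub> A = a \<odot>\<^bsub>MN\<^esub> (b \<odot>\<^bsub>MN\<^esub> A)"
    using a b c by (simp add: smult_rcos_K ring.ring_simprules(5)[OF ring_B] act_assoc)
next
  fix A assume "A \<in> carrier MN"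
  then show "\<one>\<^bsub>B\<^esub> \<odot>\<^bsub>MN\<^esub> A = A"
    by (elim tensor_elem_cases)
       (simp add: smult_rcos_K ring.ring_simprules(6)[OF left_module_ring[OF M_module]] act_one)
qed

lemma tensor_hom_ext:
  assumes H: "group H" and f: "f \<in> hom (add_monoid MN) H" and g: "g \<in> hom (add_monoid MN) H"
    and fg: "\<And>m x. \<lbrakk>m \<in> carrier M; x \<in> carrier N\<rbrakk> \<Longrightarrow> f (tmul m x) = g (tmul m x)"
    and A: "A \<in> carrier MN"
  shows "f A = g A"
proof -
  obtain c where c: "c \<in> carrier G" "A = K #>\<^bsub>G\<^esub> c" using A by (rule tensor_elem_cases)
  have "(f \<circ> (\<lambda>c. K #>\<^bsub>G\<^esub> c)) c = (g \<circ> (\<lambda>c. K #>\<^bsub>G\<^esub> c)) c"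
  proof (rule free_Abelian_group_hom_ext[OF H])
    show "f \<circ> (\<lambda>c. K #>\<^bsub>G\<^esub> c) \<in> hom (free_Abelian_group (carrier M \<times> carrier N)) H"
      using hom_compose[OF rcos_K_hom f] by (simp add: tensor_free_def)
    show "g \<circ> (\<lambda>c. K #>\<^bsub>G\<^esub> c) \<in> hom (free_Abelian_group (carrier M \<times> carrier N)) H"
      using hom_compose[OF rcos_K_hom g] by (simp add: tensor_free_def)
  qed (use c fg in \<open>auto simp: tmul_def tensor_free_def\<close>)
  then show ?thesis using c by simp
qed

lemma the_elem_image_rcos_K:
  assumes Y: "group Y" and h: "h \<in> hom G Y" and K_kernel: "K \<subseteq> kernel G Y h"
    and c: "c \<in> carrier G"
  shows "the_elem (h ` (K #>\<^bsub>G\<^esub> c)) = h c"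
proof -
  have "h (k + c) = h c" if "k \<in> K" for k
    using that K_kernel hom_mult[OF h, of k c] c hom_in_carrier[OF h] group.is_monoid[OF Y]
    by (auto simp: kernel_def)
  then have "h ` (K #>\<^bsub>G\<^esub> c) = (\<lambda>k. h c) ` K"
    unfolding rcos_K image_image by (rule image_cong[OF refl])
  then show ?thesis
    by (simp only: image_constant[OF zero_in_K] the_elem_eq)
qed

lemma the_elem_image_hom:
  assumes Y: "group Y" and h: "h \<in> hom G Y" and K_kernel: "K \<subseteq> kernel G Y h"
  shows "(\<lambda>A. the_elem (h ` A)) \<in> hom (add_monoid MN) Y"
proof (rule homI)
  fix A C assume "A \<in> carrier (add_monoid MN)" "C \<in> carrier (add_monoid MN)"
  then obtain c d where c: "c \<in> carrier G" "A = K #>\<^bsub>G\<^esub> c" and d: "d \<in> carrier G" "C = K #>\<^bsub>G\<^esub> d"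
    by (auto elim!: tensor_elem_cases)
  show "the_elem (h ` A) \<in> carrier Y"
    using c hom_in_carrier[OF h] by (simp add: the_elem_image_rcos_K[OF Y h K_kernel])
  have "c + d \<in> carrier G"
    using c d comm_group.axioms(2)[OF comm_group_G] by (metis G_ops(1) group.subgroup_self subgroup.m_closed)
  then show "the_elem (h ` (A \<otimes>\<^bsub>add_monoid MN\<^esub> C)) = the_elem (h ` A) \<otimes>\<^bsub>Y\<^esub> the_elem (h ` C)"
    using c d hom_mult[OF h, of c d] by (simp add: tensor_add rcos_K_add the_elem_image_rcos_K[OF Y h K_kernel])
qed

lemma tensor_universal:
  assumes Y: "comm_group Y"
    and f_closed: "\<And>m x. \<lbrakk>m \<in> carrier M; x \<in> carrier N\<rbrakk> \<Longrightarrow> f m x \<in> carrier Y"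
    and f_add_left: "\<And>m m' x. \<lbrakk>m \<in> carrier M; m' \<in> carrier M; x \<in> carrier N\<rbrakk>
      \<Longrightarrow> f (m \<oplus>\<^bsub>M\<^esub> m') x = f m x \<otimes>\<^bsub>Y\<^esub> f m' x"
    and f_add_right: "\<And>m x x'. \<lbrakk>m \<in> carrier M; x \<in> carrier N; x' \<in> carrier N\<rbrakk>
      \<Longrightarrow> f m (x \<oplus>\<^bsub>N\<^esub> x') = f m x \<otimes>\<^bsub>Y\<^esub> f m x'"
    and f_balanced: "\<And>m t x. \<lbrakk>m \<in> carrier M; t \<in> carrier T; x \<in> carrier N\<rbrakk>
      \<Longrightarrow> f (rT m t) x = f m (t \<odot>\<^bsub>N\<^esub> x)"
  obtains h where "h \<in> hom (add_monoid MN) Y"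
    and "\<And>m x. \<lbrakk>m \<in> carrier M; x \<in> carrier N\<rbrakk> \<Longrightarrow> h (tmul m x) = f m x"
proof -
  interpret Y: comm_group Y by (rule Y)
  obtain h0 where h0: "h0 \<in> hom (free_Abelian_group (carrier M \<times> carrier N)) Y"
    and h0_frag: "\<And>s. s \<in> carrier M \<times> carrier N \<Longrightarrow> h0 (frag_of s) = case_prod f s"
    by (rule Y.free_Abelian_group_universal[of "case_prod f" "carrier M \<times> carrier N"])
       (auto intro: f_closed)
  interpret h0: group_hom G Y h0
    using h0 by (intro group_hom.intro group_hom_axioms.intro comm_group.axioms(2)[OF comm_group_G]
        Y.is_group) (simp add: tensor_free_def)
  have h0_diff: "h0 (c - d) = h0 c \<otimes>\<^bsub>Y\<^esub> inv\<^bsub>Y\<^esub> h0 d" if "c \<in> carrier G" "d \<in> carrier G" for c d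
    using h0.hom_mult[OF that(1) h0.G.inv_closed[OF that(2)]] h0.hom_inv[OF that(2)] that
    by simp
  have cancel: "p \<otimes>\<^bsub>Y\<^esub> q \<otimes>\<^bsub>Y\<^esub> inv\<^bsub>Y\<^esub> p \<otimes>\<^bsub>Y\<^esub> inv\<^bsub>Y\<^esub> q = \<one>\<^bsub>Y\<^esub>"
    if "p \<in> carrier Y" "q \<in> carrier Y" for p q
    using that by (simp add: Y.m_assoc Y.m_lcomm[of p] Y.r_inv)
  have rel_add_left: "h0 (frag_of (m \<oplus>\<^bsub>M\<^esub> m', x) - frag_of (m, x) - frag_of (m', x)) = \<one>\<^bsub>Y\<^esub>"
    if "m \<in> carrier M" "m' \<in> carrier M" "x \<in> carrier N" for m m' x
    using that by (simp add: h0_diff G_diff_closed h0_frag f_add_left f_closed cancel)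
  have rel_add_right: "h0 (frag_of (m, x \<oplus>\<^bsub>N\<^esub> x') - frag_of (m, x) - frag_of (m, x')) = \<one>\<^bsub>Y\<^esub>"
    if "m \<in> carrier M" "x \<in> carrier N" "x' \<in> carrier N" for m x x'
    using that by (simp add: h0_diff G_diff_closed h0_frag f_add_right f_closed cancel)
  have rel_balanced: "h0 (frag_of (rT m t, x) - frag_of (m, t \<odot>\<^bsub>N\<^esub> x)) = \<one>\<^bsub>Y\<^esub>"
    if "m \<in> carrier M" "t \<in> carrier T" "x \<in> carrier N" for m t x
    using that by (simp add: h0_diff h0_frag f_balanced ract_closed left_module_smult_closed[OF N_module]
        f_closed Y.r_inv)
  have "h0 r = \<one>\<^bsub>Y\<^esub>" if "r \<in> tensor_relations T M rT N" for r
    using that by (auto simp: tensor_relations_def rel_add_left rel_add_right rel_balanced)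
  then have "tensor_relations T M rT N \<subseteq> kernel G Y h0"
    using tensor_relations_closed by (auto simp: kernel_def)
  then have K_kernel: "K \<subseteq> kernel G Y h0"
    unfolding tensor_kernel_def
    by (rule group.generate_subgroup_incl[OF comm_group.axioms(2)[OF comm_group_G] _ h0.subgroup_kernel])
  show thesis
  proof
    show "(\<lambda>A. the_elem (h0 ` A)) \<in> hom (add_monoid MN) Y"
      by (rule the_elem_image_hom[OF Y.is_group h0.homh K_kernel])
  qed (simp add: tmul_def the_elem_image_rcos_K[OF Y.is_group h0.homh K_kernel] h0_frag)
qed

end

section \<open>Coordinate frames\<close>

text \<open>
  In a coordinate frame \<open>W\<close> behaves like the power \<open>N\<^sup>J\<close>: \<open>emb\<close> is the inclusion of the
  coordinate \<open>j0\<close>, \<open>proj j\<close> are the coordinate projections, and \<open>B\<close> contains for all \<open>j\<close> and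
  \<open>t\<close> an element acting as \<open>w \<mapsto> emb (t \<cdot> proj j w)\<close>; for the column tensor product this is
  the matrix unit \<open>t E\<^sub>0\<^sub>j\<close>.
\<close>

locale coordinate_frame =
  fixes B :: "('b, 'c) ring_scheme" and W :: "('b, 'w, 'd) module_scheme"
    and T :: "('a, 'e) ring_scheme" and N :: "('a, 'x, 'f) module_scheme"
    and emb :: "'x \<Rightarrow> 'w" and proj :: "'j \<Rightarrow> 'w \<Rightarrow> 'x" and J :: "'j set" and j0 :: 'j
  assumes W_module: "left_module B W" and N_module: "left_module T N"
    and emb_hom: "emb \<in> hom (add_monoid N) (add_monoid W)"
    and proj_hom: "j \<in> J \<Longrightarrow> proj j \<in> hom (add_monoid W) (add_monoid N)"
    and base_index: "j0 \<in> J"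
    and proj_emb: "x \<in> carrier N \<Longrightarrow> proj j0 (emb x) = x"
    and matrix_units: "\<lbrakk>j \<in> J; t \<in> carrier T\<rbrakk>
      \<Longrightarrow> \<exists>b\<in>carrier B. \<forall>w\<in>carrier W. b \<odot>\<^bsub>W\<^esub> w = emb (t \<odot>\<^bsub>N\<^esub> proj j w)"
    and proj_separate: "\<lbrakk>w \<in> carrier W; \<forall>j\<in>J. proj j w = \<zero>\<^bsub>N\<^esub>\<rbrakk> \<Longrightarrow> w = \<zero>\<^bsub>W\<^esub>"
begin

sublocale W: abelian_group W by (rule left_module_abelian_group[OF W_module])
sublocale N: abelian_group N by (rule left_module_abelian_group[OF N_module])

sublocale emb: group_hom "add_monoid N" "add_monoid W" emb
  by (intro group_hom.intro group_hom_axioms.intro N.a_group W.a_group emb_hom)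

lemma proj_group_hom: "j \<in> J \<Longrightarrow> group_hom (add_monoid W) (add_monoid N) (proj j)"
  by (intro group_hom.intro group_hom_axioms.intro N.a_group W.a_group proj_hom)

lemma emb_zero: "emb \<zero>\<^bsub>N\<^esub> = \<zero>\<^bsub>W\<^esub>"
  using emb.hom_one by simp

lemma emb_closed: "x \<in> carrier N \<Longrightarrow> emb x \<in> carrier W"
  using emb.hom_closed by simp

lemma emb_add: "x \<in> carrier N \<Longrightarrow> y \<in> carrier N \<Longrightarrow> emb (x \<oplus>\<^bsub>N\<^esub> y) = emb x \<oplus>\<^bsub>W\<^esub> emb y"
  using emb.hom_mult by simp

lemma proj_closed: "j \<in> J \<Longrightarrow> w \<in> carrier W \<Longrightarrow> proj j w \<in> carrier N"
  using group_hom.hom_closed[OF proj_group_hom] by simp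

lemma proj_add:
  "j \<in> J \<Longrightarrow> v \<in> carrier W \<Longrightarrow> w \<in> carrier W \<Longrightarrow> proj j (v \<oplus>\<^bsub>W\<^esub> w) = proj j v \<oplus>\<^bsub>N\<^esub> proj j w"
  using group_hom.hom_mult[OF proj_group_hom] by simp

lemma emb_eq_zero_iff: "x \<in> carrier N \<Longrightarrow> emb x = \<zero>\<^bsub>W\<^esub> \<longleftrightarrow> x = \<zero>\<^bsub>N\<^esub>"
  using proj_emb group_hom.hom_one[OF proj_group_hom[OF base_index]] emb_zero by force

lemma smult_emb:
  assumes "t \<in> carrier T" "x \<in> carrier N"
  obtains b where "b \<in> carrier B" "b \<odot>\<^bsub>W\<^esub> emb x = emb (t \<odot>\<^bsub>N\<^esub> x)"
  using matrix_units[OF base_index assms(1)] assms(2) by (auto simp: emb_closed proj_emb)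

lemma emb_proj_smult:
  assumes "j \<in> J"
  obtains b where "b \<in> carrier B" "\<And>w. w \<in> carrier W \<Longrightarrow> b \<odot>\<^bsub>W\<^esub> w = emb (proj j w)"
  using matrix_units[OF assms ring.ring_simprules(6)[OF left_module_ring[OF N_module]]] assms
  by (auto simp: left_module_smult_one[OF N_module] proj_closed)

definition pullback :: "'w set \<Rightarrow> 'x set" where
  "pullback U = {x \<in> carrier N. emb x \<in> U}"

lemma proj_in_pullback:
  assumes U: "submodule U B W" and j: "j \<in> J" and w: "w \<in> U"
  shows "proj j w \<in> pullback U"
proof -
  have w_carrier: "w \<in> carrier W" using w submodule_subset[OF U] by blast
  obtain b where "b \<in> carrier B" "emb (proj j w) = b \<odot>\<^bsub>W\<^esub> w"
    using emb_proj_smult[OF j] w_carrier by metis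
  then show ?thesis
    using submodule.smult_closed[OF U] w j w_carrier by (simp add: pullback_def proj_closed)
qed

lemma submodule_pullback:
  assumes U: "submodule U B W"
  shows "submodule (pullback U) T N"
proof (intro submodule.intro subgroup.intro submodule_axioms.intro)
  fix x y assume "x \<in> pullback U" "y \<in> pullback U"
  then show "x \<otimes>\<^bsub>add_monoid N\<^esub> y \<in> pullback U"
    using submodule_add_closed[OF U] by (simp add: pullback_def emb_add)
next
  fix x assume "x \<in> pullback U"
  then show "inv\<^bsub>add_monoid N\<^esub> x \<in> pullback U"
    using emb.hom_inv[of x] subgroup.m_inv_closed[OF submodule.axioms(1)[OF U], of "emb x"]
    by (simp add: pullback_def)
next
  fix t x assume t: "t \<in> carrier T" and x: "x \<in> pullback U"
  obtain b where "b \<in> carrier B" "b \<odot>\<^bsub>W\<^esub> emb x = emb (t \<odot>\<^bsub>N\<^esub> x)"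
    using t x by (auto simp: pullback_def elim: smult_emb)
  with t x show "t \<odot>\<^bsub>N\<^esub> x \<in> pullback U"
    using submodule.smult_closed[OF U, of b "emb x"]
    by (simp add: pullback_def left_module_smult_closed[OF N_module])
qed (simp_all add: pullback_def emb_zero submodule_zero_closed[OF U])

lemma trivial_if_pullback_trivial:
  assumes U: "submodule U B W" and triv: "pullback U = {\<zero>\<^bsub>N\<^esub>}"
  shows "U = {\<zero>\<^bsub>W\<^esub>}"
proof -
  have "w = \<zero>\<^bsub>W\<^esub>" if w: "w \<in> U" for w
    using proj_separate submodule_subset[OF U] w proj_in_pullback[OF U _ w] triv by blast
  then show ?thesis using submodule_zero_closed[OF U] by blast
qed

lemma pullback_inter:
  assumes U: "submodule U B W" and V: "submodule V B W" and UV: "U \<inter> V = {\<zero>\<^bsub>W\<^esub>}"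
  shows "pullback U \<inter> pullback V = {\<zero>\<^bsub>N\<^esub>}"
proof -
  have "pullback U \<inter> pullback V \<subseteq> {\<zero>\<^bsub>N\<^esub>}"
    using UV emb_eq_zero_iff by (auto simp: pullback_def)
  then show ?thesis
    using submodule_zero_closed[OF submodule_pullback[OF U]] submodule_zero_closed[OF submodule_pullback[OF V]]
    by blast
qed

lemma pullback_set_add:
  assumes U: "submodule U B W" and V: "submodule V B W" and sum: "U <+>\<^bsub>W\<^esub> V = carrier W"
  shows "pullback U <+>\<^bsub>N\<^esub> pullback V = carrier N"
proof
  show "pullback U <+>\<^bsub>N\<^esub> pullback V \<subseteq> carrier N"
    by (auto simp: set_add_def' pullback_def)
next
  show "carrier N \<subseteq> pullback U <+>\<^bsub>N\<^esub> pullback V"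
  proof
    fix x assume x: "x \<in> carrier N"
    then have "emb x \<in> U <+>\<^bsub>W\<^esub> V" using sum emb_closed by blast
    then obtain u v where uv: "u \<in> U" "v \<in> V" "emb x = u \<oplus>\<^bsub>W\<^esub> v"
      by (auto simp: set_add_def')
    then have "x = proj j0 u \<oplus>\<^bsub>N\<^esub> proj j0 v"
      using proj_emb[OF x] proj_add[OF base_index] submodule_subset[OF U] submodule_subset[OF V]
      by auto
    then show "x \<in> pullback U <+>\<^bsub>N\<^esub> pullback V"
      using proj_in_pullback[OF U base_index uv(1)] proj_in_pullback[OF V base_index uv(2)]
      by (auto simp: set_add_def')
  qed
qed

theorem indecomposable_transfer:
  assumes N: "indecomposable_module T N"
  shows "indecomposable_module B W"
  unfolding indecomposable_module_def
proof (intro conjI allI impI)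
  show "left_module B W" by (rule W_module)
  obtain x where "x \<in> carrier N" "x \<noteq> \<zero>\<^bsub>N\<^esub>"
    using N by (rule indecomposable_module_nontrivial)
  then show "carrier W \<noteq> {\<zero>\<^bsub>W\<^esub>}"
    using emb_closed emb_eq_zero_iff by blast
next
  fix U V
  assume "submodule U B W \<and> submodule V B W \<and> U \<inter> V = {\<zero>\<^bsub>W\<^esub>} \<and> U <+>\<^bsub>W\<^esub> V = carrier W"
  then have U: "submodule U B W" and V: "submodule V B W"
    and UV: "U \<inter> V = {\<zero>\<^bsub>W\<^esub>}" and sum: "U <+>\<^bsub>W\<^esub> V = carrier W" by auto
  have "pullback U = {\<zero>\<^bsub>N\<^esub>} \<or> pullback V = {\<zero>\<^bsub>N\<^esub>}"
    by (intro indecomposable_moduleD[OF N] submodule_pullback pullback_inter pullback_set_add U V UV sum)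
  then show "U = {\<zero>\<^bsub>W\<^esub>} \<or> V = {\<zero>\<^bsub>W\<^esub>}"
    using trivial_if_pullback_trivial[OF U] trivial_if_pullback_trivial[OF V] by blast
qed

end

section \<open>The column tensor product\<close>

locale column_tensor =
  fixes T :: "('a, 'e) ring_scheme" and Xm :: "('a, 'x, 'f) module_scheme" and n :: nat
  assumes Xm_module: "left_module T Xm"
begin

sublocale T: ring T by (rule left_module_ring[OF Xm_module])

sublocale tensor_bimodule "upper_tri T n" T "column_module T n" "column_ract T" Xm
  by unfold_locales
     (simp_all add: T.left_module_column_module Xm_module T.column_ract_closed T.column_smult_ract)

lemma coord_exists:
  "\<exists>h. h \<in> hom (add_monoid MN) (add_monoid Xm) \<and>
     (\<forall>m\<in>carrier (column_module T n). \<forall>x\<in>carrier Xm. h (tmul m x) = m j \<odot>\<^bsub>Xm\<^esub> x)"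
proof -
  obtain h where "h \<in> hom (add_monoid MN) (add_monoid Xm)"
    "\<And>m x. \<lbrakk>m \<in> carrier (column_module T n); x \<in> carrier Xm\<rbrakk> \<Longrightarrow> h (tmul m x) = m j \<odot>\<^bsub>Xm\<^esub> x"
  proof (rule tensor_universal[OF N.a_comm_group, of "\<lambda>m x. m j \<odot>\<^bsub>Xm\<^esub> x"])
    fix m x assume "m \<in> carrier (column_module T n)" "x \<in> carrier Xm"
    then show "m j \<odot>\<^bsub>Xm\<^esub> x \<in> carrier (add_monoid Xm)"
      by (simp add: T.carrier_column_module left_module_smult_closed[OF Xm_module])
  next
    fix m m' x
    assume "m \<in> carrier (column_module T n)" "m' \<in> carrier (column_module T n)" "x \<in> carrier Xm"
    then show "(m \<oplus>\<^bsub>column_module T n\<^esub> m') j \<odot>\<^bsub>Xm\<^esub> x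
        = (m j \<odot>\<^bsub>Xm\<^esub> x) \<otimes>\<^bsub>add_monoid Xm\<^esub> (m' j \<odot>\<^bsub>Xm\<^esub> x)"
      by (simp add: column_module_def left_module_smult_l_distr[OF Xm_module])
  next
    fix m x x' assume "m \<in> carrier (column_module T n)" "x \<in> carrier Xm" "x' \<in> carrier Xm"
    then show "m j \<odot>\<^bsub>Xm\<^esub> (x \<oplus>\<^bsub>Xm\<^esub> x') = (m j \<odot>\<^bsub>Xm\<^esub> x) \<otimes>\<^bsub>add_monoid Xm\<^esub> (m j \<odot>\<^bsub>Xm\<^esub> x')"
      by (simp add: T.carrier_column_module left_module_smult_r_distr[OF Xm_module])
  next
    fix m t x assume "m \<in> carrier (column_module T n)" "t \<in> carrier T" "x \<in> carrier Xm"
    then show "column_ract T m t j \<odot>\<^bsub>Xm\<^esub> x = m j \<odot>\<^bsub>Xm\<^esub> (t \<odot>\<^bsub>Xm\<^esub> x)"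
      by (simp add: T.carrier_column_module column_ract_def left_module_smult_assoc[OF Xm_module])
  qed (rule that)
  then show ?thesis by blast
qed

definition coord :: "nat \<Rightarrow> ((nat \<Rightarrow> 'a) \<times> 'x \<Rightarrow>\<^sub>0 int) set \<Rightarrow> 'x" where
  "coord j = (SOME h. h \<in> hom (add_monoid MN) (add_monoid Xm) \<and>
     (\<forall>m\<in>carrier (column_module T n). \<forall>x\<in>carrier Xm. h (tmul m x) = m j \<odot>\<^bsub>Xm\<^esub> x))"

lemma coord_hom: "coord j \<in> hom (add_monoid MN) (add_monoid Xm)"
  and coord_tmul: "\<lbrakk>m \<in> carrier (column_module T n); x \<in> carrier Xm\<rbrakk> \<Longrightarrow> coord j (tmul m x) = m j \<odot>\<^bsub>Xm\<^esub> x"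
  using someI_ex[OF coord_exists[of j]] unfolding coord_def by blast+

lemma coord_closed: "A \<in> carrier MN \<Longrightarrow> coord j A \<in> carrier Xm"
  using hom_in_carrier[OF coord_hom] by fastforce

lemma coord_add:
  "A \<in> carrier MN \<Longrightarrow> C \<in> carrier MN \<Longrightarrow> coord j (A \<oplus>\<^bsub>MN\<^esub> C) = coord j A \<oplus>\<^bsub>Xm\<^esub> coord j C"
  using hom_mult[OF coord_hom] by fastforce

lemma tmul_eq_finsum_unit_columns:
  assumes m: "m \<in> carrier (column_module T n)" and x: "x \<in> carrier Xm"
  shows "tmul m x = (\<Oplus>\<^bsub>MN\<^esub> j\<in>{..<n}. tmul (unit_column T j) (m j \<odot>\<^bsub>Xm\<^esub> x))"
proof -
  have mj: "\<And>j. m j \<in> carrier T" using m by (simp add: T.carrier_column_module)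
  have "tmul m x = tmul (\<Oplus>\<^bsub>column_module T n\<^esub> j\<in>{..<n}. column_ract T (unit_column T j) (m j)) x"
    using T.column_eq_finsum_unit_columns[OF m] by simp
  also have "\<dots> = (\<Oplus>\<^bsub>MN\<^esub> j\<in>{..<n}. tmul (column_ract T (unit_column T j) (m j)) x)"
    using mj x by (intro tmul_finsum_left) (auto intro!: T.column_ract_closed T.unit_column_closed)
  also have "\<dots> = (\<Oplus>\<^bsub>MN\<^esub> j\<in>{..<n}. tmul (unit_column T j) (m j \<odot>\<^bsub>Xm\<^esub> x))"
  proof (rule MN.finsum_cong'[OF refl])
    show "(\<lambda>j. tmul (unit_column T j) (m j \<odot>\<^bsub>Xm\<^esub> x)) \<in> {..<n} \<rightarrow> carrier MN"
      using mj x by (simp add: tmul_closed T.unit_column_closed left_module_smult_closed[OF Xm_module])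
    show "tmul (column_ract T (unit_column T j) (m j)) x = tmul (unit_column T j) (m j \<odot>\<^bsub>Xm\<^esub> x)"
      if "j \<in> {..<n}" for j
      using that mj x by (simp add: tmul_balanced T.unit_column_closed)
  qed
  finally show ?thesis .
qed

lemma tensor_eq_finsum_coord:
  assumes A: "A \<in> carrier MN"
  shows "A = (\<Oplus>\<^bsub>MN\<^esub> j\<in>{..<n}. tmul (unit_column T j) (coord j A))"
proof (rule tensor_hom_ext[OF MN.a_group _ _ _ A])
  show "(\<lambda>A. A) \<in> hom (add_monoid MN) (add_monoid MN)"
    by (rule homI) simp_all
  show "(\<lambda>A. \<Oplus>\<^bsub>MN\<^esub> j\<in>{..<n}. tmul (unit_column T j) (coord j A)) \<in> hom (add_monoid MN) (add_monoid MN)"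
  proof (rule homI)
    have closed: "(\<lambda>j. tmul (unit_column T j) (coord j A)) \<in> {..<n} \<rightarrow> carrier MN"
      if "A \<in> carrier MN" for A
      using that by (simp add: tmul_closed T.unit_column_closed coord_closed)
    fix A C assume A: "A \<in> carrier (add_monoid MN)" and C: "C \<in> carrier (add_monoid MN)"
    then show "(\<Oplus>\<^bsub>MN\<^esub> j\<in>{..<n}. tmul (unit_column T j) (coord j A)) \<in> carrier (add_monoid MN)"
      using closed by simp
    have "(\<Oplus>\<^bsub>MN\<^esub> j\<in>{..<n}. tmul (unit_column T j) (coord j (A \<oplus>\<^bsub>MN\<^esub> C)))
       = (\<Oplus>\<^bsub>MN\<^esub> j\<in>{..<n}. tmul (unit_column T j) (coord j A) \<oplus>\<^bsub>MN\<^esub> tmul (unit_column T j) (coord j C))"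
      using A C closed by (intro MN.finsum_cong'[OF refl])
        (auto simp: coord_add tmul_add_right T.unit_column_closed coord_closed)
    also have "\<dots> = (\<Oplus>\<^bsub>MN\<^esub> j\<in>{..<n}. tmul (unit_column T j) (coord j A))
         \<oplus>\<^bsub>MN\<^esub> (\<Oplus>\<^bsub>MN\<^esub> j\<in>{..<n}. tmul (unit_column T j) (coord j C))"
      using A C closed by (intro MN.finsum_addf) auto
    finally show "(\<Oplus>\<^bsub>MN\<^esub> j\<in>{..<n}. tmul (unit_column T j) (coord j (A \<otimes>\<^bsub>add_monoid MN\<^esub> C)))
       = (\<Oplus>\<^bsub>MN\<^esub> j\<in>{..<n}. tmul (unit_column T j) (coord j A))
         \<otimes>\<^bsub>add_monoid MN\<^esub> (\<Oplus>\<^bsub>MN\<^esub> j\<in>{..<n}. tmul (unit_column T j) (coord j C))"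
      by simp
  qed
qed (simp add: coord_tmul, rule tmul_eq_finsum_unit_columns)

lemma coords_zero_imp_zero:
  assumes A: "A \<in> carrier MN" and zero: "\<forall>j\<in>{..<n}. coord j A = \<zero>\<^bsub>Xm\<^esub>"
  shows "A = \<zero>\<^bsub>MN\<^esub>"
proof -
  have "(\<Oplus>\<^bsub>MN\<^esub> j\<in>{..<n}. tmul (unit_column T j) (coord j A)) = (\<Oplus>\<^bsub>MN\<^esub> j\<in>{..<n}. \<zero>\<^bsub>MN\<^esub>)"
    using zero by (intro MN.finsum_cong'[OF refl]) (simp_all add: tmul_zero_right T.unit_column_closed)
  then show ?thesis
    using tensor_eq_finsum_coord[OF A] by simp
qed

lemma matrix_unit_smult_tensor:
  assumes j: "j < n" and t: "t \<in> carrier T" and A: "A \<in> carrier MN"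
  shows "matrix_unit T 0 j t \<odot>\<^bsub>MN\<^esub> A = tmul (unit_column T 0) (t \<odot>\<^bsub>Xm\<^esub> coord j A)"
proof (rule tensor_hom_ext[OF MN.a_group _ _ _ A])
  have E: "matrix_unit T 0 j t \<in> carrier (upper_tri T n)"
    using j t by (simp add: T.matrix_unit_closed)
  have e0: "unit_column T 0 \<in> carrier (column_module T n)"
    using j by (simp add: T.unit_column_closed)
  show "(\<lambda>A. matrix_unit T 0 j t \<odot>\<^bsub>MN\<^esub> A) \<in> hom (add_monoid MN) (add_monoid MN)"
    by (rule left_module_smult_hom[OF left_module_tensor E])
  show "(\<lambda>A. tmul (unit_column T 0) (t \<odot>\<^bsub>Xm\<^esub> coord j A)) \<in> hom (add_monoid MN) (add_monoid MN)"
    using t e0 by (intro homI)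
      (simp_all add: tmul_closed coord_closed coord_add tmul_add_right left_module_smult_closed[OF Xm_module]
        left_module_smult_r_distr[OF Xm_module])
  fix m x assume m: "m \<in> carrier (column_module T n)" and x: "x \<in> carrier Xm"
  have mj: "m j \<in> carrier T" using m by (simp add: T.carrier_column_module)
  have "matrix_unit T 0 j t \<odot>\<^bsub>MN\<^esub> tmul m x = tmul (column_ract T (unit_column T 0) (t \<otimes>\<^bsub>T\<^esub> m j)) x"
    using j t m E by (simp add: smult_tmul T.matrix_unit_smult)
  also have "\<dots> = tmul (unit_column T 0) (t \<odot>\<^bsub>Xm\<^esub> (m j \<odot>\<^bsub>Xm\<^esub> x))"
    using t mj x e0 by (simp add: tmul_balanced left_module_smult_assoc[OF Xm_module])
  finally show "matrix_unit T 0 j t \<odot>\<^bsub>MN\<^esub> tmul m x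
      = tmul (unit_column T 0) (t \<odot>\<^bsub>Xm\<^esub> coord j (tmul m x))"
    using m x by (simp add: coord_tmul)
qed

lemma coordinate_frame_column_tensor:
  assumes "0 < n"
  shows "coordinate_frame (upper_tri T n) MN T Xm (tmul (unit_column T 0)) coord {..<n} 0"
proof
  have e0: "unit_column T 0 \<in> carrier (column_module T n)"
    using assms by (simp add: T.unit_column_closed)
  show "left_module (upper_tri T n) MN" by (rule left_module_tensor)
  show "left_module T Xm" by (rule Xm_module)
  show "tmul (unit_column T 0) \<in> hom (add_monoid Xm) (add_monoid MN)"
    using e0 by (intro homI) (simp_all add: tmul_closed tmul_add_right)
  show "coord j \<in> hom (add_monoid MN) (add_monoid Xm)" for j
    by (rule coord_hom)
  show "0 \<in> {..<n}" using assms by simp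
  show "coord 0 (tmul (unit_column T 0) x) = x" if "x \<in> carrier Xm" for x
    using that e0 by (simp add: coord_tmul unit_column_def left_module_smult_one[OF Xm_module])
  show "\<exists>b\<in>carrier (upper_tri T n). \<forall>A\<in>carrier MN.
      b \<odot>\<^bsub>MN\<^esub> A = tmul (unit_column T 0) (t \<odot>\<^bsub>Xm\<^esub> coord j A)"
    if "j \<in> {..<n}" "t \<in> carrier T" for j t
    using that by (intro bexI[of _ "matrix_unit T 0 j t"]) (simp_all add: matrix_unit_smult_tensor
        T.matrix_unit_closed)
  show "A = \<zero>\<^bsub>MN\<^esub>" if "A \<in> carrier MN" "\<forall>j\<in>{..<n}. coord j A = \<zero>\<^bsub>Xm\<^esub>" for A
    using that by (rule coords_zero_imp_zero)
qed

theorem indecomposable_column_tensor: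
  assumes "0 < n" and "indecomposable_module T Xm"
  shows "indecomposable_module (upper_tri T n) MN"
  using coordinate_frame.indecomposable_transfer[OF coordinate_frame_column_tensor] assms .

end

theorem lemma4p3:
  fixes R :: "'r ring" and \<phi> :: "'r \<Rightarrow> 'a" and T :: "'a ring"
    and Xm :: "('a, 'x) module" and n :: nat
  assumes "artin_algebra R \<phi> T"
    and "finitely_generated_module T Xm"
    and "indecomposable_module T Xm"
    and "n \<ge> 1"
  shows "indecomposable_module (upper_tri T n)
           (tensor T (column_module T n) (column_ract T) Xm)"
proof -
  interpret column_tensor T Xm n
    using assms(3) by unfold_locales (simp add: indecomposable_module_def)
  show ?thesis
    using indecomposable_column_tensor assms(3,4) by simp
qed

end
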